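(* For every $\mathcal{A}\subseteq\wp(\mathcal{G})$, $\mathrm{Ext}'(\mathcal{A})=\mathrm{Ext}(\mathcal{A})$, where $B\in\mathrm{Ext}'(\mathcal{A})$ iff either (i) there is some $f\in B$ with $f\in\mathcal{G}_{\gneq0}$, or (ii) there are finitely many $A_1,\ldots,A_n\in\mathcal{A}$ ($n\geq1$) such that for each $\langle g_1,\ldots,g_n\rangle\in A_1\times\cdots\times A_n$ with $0\notin\mathcal{E}(\{g_1,\ldots,g_n\})$, there exist $f\in B$ and $h\in\mathrm{posi}(\{g_1,\ldots,g_n\})$ with $f\geq h$.
   Context: $\Omega$ is a non-empty set and $\mathcal{G}$ is the set of bounded functions $\Omega\to\mathbb{R}$. $f\geq g$ means pointwise $\geq$; $f\gneq g$ means $f\geq g$ and $f\neq g$; $\mathcal{G}_{\gneq 0}=\{f: f\gneq 0\}$. $\mathrm{posi}(B)=\{\sum_{i=1}^m\lambda_i h_i: m\geq1,\lambda_i>0,h_i\in B\}$, and $\mathcal{E}(E):=\mathrm{posi}(E\cup\mathcal{G}_{\gneq 0})$. Definition of $\mathrm{Ext}$: if $\mathcal{A}\neq\emptyset$, $B\in\mathrm{Ext}(\mathcal{A})$ iff there are finitely many $A_1,\ldots,A_n\in\mathcal{A}$ ($n\geq1$) such that for each $\langle g_1,\ldots,g_n\rangle\in A_1\times\cdots\times A_n$ with $0\notin\mathcal{E}(\{g_1,\ldots,g_n\})$, there is some $f\in B$ with $f\in\mathcal{E}(\{g_1,\ldots,g_n\})$. If $\mathcal{A}=\emptyset$, $B\in\mathrm{Ext}(\emptyset)$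 iff $B\cap\mathcal{G}_{\gneq0}\neq\emptyset$. *)

theory Defs
  imports Complex_Main
begin

text \<open>Omega is the (nonempty) type 'a. Gambles are bounded real functions on 'a.\<close>

definition gambles :: "('a \<Rightarrow> real) set" where
  "gambles = {f. \<exists>c. \<forall>x. \<bar>f x\<bar> \<le> c}"

definition gneq0 :: "('a \<Rightarrow> real) set" where
  "gneq0 = {f. f \<in> gambles \<and> (\<forall>x. f x \<ge> 0) \<and> f \<noteq> (\<lambda>x. 0)}"

definition posi :: "('a \<Rightarrow> real) set \<Rightarrow> ('a \<Rightarrow> real) set" where
  "posi B = {f. \<exists>m::nat. m \<ge> 1 \<and> (\<exists>lam h. (\<forall>i<m. lam i > (0::real) \<and> h i \<in> B)
                  \<and> f = (\<lambda>x. \<Sum>i<m. lam i * h i x))}"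

definition natext :: "('a \<Rightarrow> real) set \<Rightarrow> ('a \<Rightarrow> real) set" where
  "natext E = posi (E \<union> gneq0)"

definition Ext :: "('a \<Rightarrow> real) set set \<Rightarrow> ('a \<Rightarrow> real) set set" where
  "Ext \<A> = (if \<A> = {} then {B. B \<subseteq> gambles \<and> B \<inter> gneq0 \<noteq> {}}
    else {B. B \<subseteq> gambles \<and>
      (\<exists>n::nat. n \<ge> 1 \<and> (\<exists>A. (\<forall>i<n. A i \<in> \<A>) \<and>
        (\<forall>g. (\<forall>i<n. g i \<in> A i) \<longrightarrow> (\<lambda>x. 0) \<notin> natext (g ` {..<n}) \<longrightarrow>
           (\<exists>f\<in>B. f \<in> natext (g ` {..<n})))))})"

definition Ext' :: "('a \<Rightarrow> real) set set \<Rightarrow> ('a \<Rightarrow> real) set set" where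
  "Ext' \<A> = {B. B \<subseteq> gambles \<and>
     ((\<exists>f\<in>B. f \<in> gneq0) \<or>
      (\<exists>n::nat. n \<ge> 1 \<and> (\<exists>A. (\<forall>i<n. A i \<in> \<A>) \<and>
        (\<forall>g. (\<forall>i<n. g i \<in> A i) \<longrightarrow> (\<lambda>x. 0) \<notin> natext (g ` {..<n}) \<longrightarrow>
           (\<exists>f\<in>B. \<exists>h\<in>posi (g ` {..<n}). \<forall>x. f x \<ge> h x)))))}"

end

theory Submission
  imports Defs
begin

text \<open>Since posi (A \<union> B) consists of posi A, posi B and their pairwise sums, and posi gneq0 = gneq0,
  an element of natext G is either in gneq0 or a gamble dominating some h \<in> posi G (namely
  h plus a nonnegative function). Conversely a gamble f \<ge> h is h itself or h + (f - h) with
  f - h \<in> gneq0. So "some f \<in> B lies in natext G" means "some f \<in> B is in gneq0 or dominates an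
  element of posi G", and the first alternative, which does not depend on the selection
  g_1, ..., g_n, can be pulled out as clause (i) of Ext'.\<close>

lemma gambles_add:
  assumes "a \<in> gambles" "b \<in> gambles"
  shows "(\<lambda>x. a x + b x) \<in> gambles"
proof -
  obtain ca cb where "\<forall>x. \<bar>a x\<bar> \<le> ca" "\<forall>x. \<bar>b x\<bar> \<le> cb"
    using assms unfolding gambles_def by blast
  then have "\<forall>x. \<bar>a x + b x\<bar> \<le> ca + cb"
    by (metis abs_triangle_ineq add_mono order_trans)
  then show ?thesis unfolding gambles_def by blast
qed

lemma gambles_scale:
  assumes "b \<in> gambles"
  shows "(\<lambda>x. c * b x) \<in> gambles"
proof -
  obtain cb where "\<forall>x. \<bar>b x\<bar> \<le> cb"
    using assms unfolding gambles_def by blast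
  then have "\<forall>x. \<bar>c * b x\<bar> \<le> \<bar>c\<bar> * cb"
    by (simp add: abs_mult mult_left_mono)
  then show ?thesis unfolding gambles_def by blast
qed

lemma gambles_diff: "a \<in> gambles \<Longrightarrow> b \<in> gambles \<Longrightarrow> (\<lambda>x. a x - b x) \<in> gambles"
  using gambles_add[of a "\<lambda>x. -1 * b x"] gambles_scale[of b "-1"] by simp

lemma posi_scale: "b \<in> B \<Longrightarrow> c > 0 \<Longrightarrow> (\<lambda>x. c * b x) \<in> posi B"
  unfolding posi_def
  by (rule CollectI, rule exI[of _ 1], auto intro!: exI[of _ "\<lambda>_. c"] exI[of _ "\<lambda>_. b"])

lemma subset_posi: "B \<subseteq> posi B"
  using posi_scale[of _ B 1] by auto

lemma posi_mono: "B \<subseteq> C \<Longrightarrow> posi B \<subseteq> posi C"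
  unfolding posi_def by blast

lemma posi_add_scale:
  assumes "f \<in> posi B" "b \<in> B" "c > 0"
  shows "(\<lambda>x. f x + c * b x) \<in> posi B"
proof -
  from assms(1) obtain m :: nat and lam h where m: "m \<ge> 1" "\<forall>i<m. lam i > (0::real) \<and> h i \<in> B"
    "f = (\<lambda>x. \<Sum>i<m. lam i * h i x)" unfolding posi_def by auto
  define lam' where "lam' = lam(m := c)"
  define h' where "h' = h(m := b)"
  have "(\<lambda>x. f x + c * b x) = (\<lambda>x. \<Sum>i<Suc m. lam' i * h' i x)"
    using m(3) by (auto simp: lam'_def h'_def intro!: sum.cong)
  moreover have "\<forall>i<Suc m. lam' i > 0 \<and> h' i \<in> B"
    using m(2) assms by (auto simp: lam'_def h'_def less_Suc_eq)
  ultimately show ?thesis unfolding posi_def by (intro CollectI exI[of _ "Suc m"]) auto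
qed

lemma posi_induct [consumes 1, case_names scale add_scale]:
  assumes "f \<in> posi B"
    and scale: "\<And>b c. b \<in> B \<Longrightarrow> c > 0 \<Longrightarrow> P (\<lambda>x. c * b x)"
    and add_scale: "\<And>f b c. f \<in> posi B \<Longrightarrow> P f \<Longrightarrow> b \<in> B \<Longrightarrow> c > 0 \<Longrightarrow> P (\<lambda>x. f x + c * b x)"
  shows "P f"
proof -
  from assms(1) obtain m :: nat and lam h where m: "m \<ge> 1" "\<forall>i<m. lam i > (0::real) \<and> h i \<in> B"
    "f = (\<lambda>x. \<Sum>i<m. lam i * h i x)" unfolding posi_def by auto
  have "(\<lambda>x. \<Sum>i<k. lam i * h i x) \<in> posi B \<and> P (\<lambda>x. \<Sum>i<k. lam i * h i x)"
    if "1 \<le> k" "k \<le> m" for k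
    using that
  proof (induction k rule: nat_induct_at_least)
    case base
    then show ?case using m(2) posi_scale[of "h 0" B "lam 0"] scale[of "h 0" "lam 0"] by simp
  next
    case (Suc k)
    then show ?case
      using m(2) posi_add_scale[of _ B "h k" "lam k"] add_scale[of _ "h k" "lam k"] by simp
  qed
  then show ?thesis using m(1,3) by simp
qed

lemma posi_add:
  assumes "a \<in> posi B" "b \<in> posi B"
  shows "(\<lambda>x. a x + b x) \<in> posi B"
  using assms(2)
proof (induction b rule: posi_induct)
  case (scale b c)
  then show ?case using assms(1) by (rule posi_add_scale[rotated])
next
  case (add_scale f b c)
  then show ?case using posi_add_scale[of "\<lambda>x. a x + f x" B b c] by (simp add: add.assoc)
qed

lemma posi_Un:
  "posi (A \<union> B) = posi A \<union> posi B \<union> {\<lambda>x. a x + b x | a b. a \<in> posi A \<and> b \<in> posi B}"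
  (is "_ = ?cone")
proof
  show "posi (A \<union> B) \<subseteq> ?cone"
  proof
    fix f assume "f \<in> posi (A \<union> B)"
    then show "f \<in> ?cone"
    proof (induction f rule: posi_induct)
      case (scale b c)
      then show ?case using posi_scale by blast
    next
      case (add_scale f b c)
      let ?g = "\<lambda>x. c * b x"
      have g: "?g \<in> posi A \<or> ?g \<in> posi B"
        using add_scale posi_scale by blast
      have mixed: "(\<lambda>x. a x + b' x) \<in> ?cone" if "a \<in> posi A" "b' \<in> posi B" for a b'
        using that by blast
      from add_scale.IH consider "f \<in> posi A" | "f \<in> posi B"
        | a b' where "a \<in> posi A" "b' \<in> posi B" "f = (\<lambda>x. a x + b' x)"
        by blast
      then show ?case
      proof cases
        case 1
        then show ?thesis using g posi_add[of f A ?g] mixed[of f ?g] by auto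
      next
        case 2
        then show ?thesis using g posi_add[of f B ?g] mixed[of ?g f] by (auto simp: add.commute)
      next
        case (3 a b')
        then show ?thesis
          using g posi_add[of a A ?g] posi_add[of b' B ?g] mixed[of "\<lambda>x. a x + ?g x" b']
            mixed[of a "\<lambda>x. b' x + ?g x"] by (auto simp: algebra_simps)
      qed
    qed
  qed
  show "?cone \<subseteq> posi (A \<union> B)"
    using posi_mono[of A "A \<union> B"] posi_mono[of B "A \<union> B"] posi_add by blast
qed

lemma posi_gambles:
  assumes "B \<subseteq> gambles" "f \<in> posi B"
  shows "f \<in> gambles"
  using assms(2) by (induction rule: posi_induct) (use assms(1) in \<open>auto intro!: gambles_add gambles_scale\<close>)

lemma posi_gneq0: "posi gneq0 = gneq0"
proof
  show "posi gneq0 \<subseteq> gneq0"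
  proof
    fix f assume "f \<in> posi gneq0"
    then show "f \<in> gneq0"
    proof (induction f rule: posi_induct)
      case (scale b c)
      then obtain x where "b x \<noteq> 0" by (auto simp: gneq0_def fun_eq_iff)
      with scale have "c * b x \<noteq> 0" by simp
      with scale show ?case by (auto simp: gneq0_def fun_eq_iff intro: gambles_scale)
    next
      case (add_scale f b c)
      then obtain x where "f x \<noteq> 0" by (auto simp: gneq0_def fun_eq_iff)
      with add_scale have "f x > 0" "c * b x \<ge> 0" by (auto simp: gneq0_def less_le)
      then have "(\<lambda>x. f x + c * b x) \<noteq> (\<lambda>x. 0)" by (metis add_pos_nonneg less_irrefl)
      with add_scale show ?case by (auto simp: gneq0_def intro!: gambles_add gambles_scale)
    qed
  qed
  show "gneq0 \<subseteq> posi gneq0" by (rule subset_posi)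
qed

lemma natext_eq:
  assumes "G \<subseteq> gambles"
  shows "natext G = gneq0 \<union> {f \<in> gambles. \<exists>h\<in>posi G. h \<le> f}"
proof -
  have "natext G = posi G \<union> gneq0 \<union> {\<lambda>x. a x + b x | a b. a \<in> posi G \<and> b \<in> gneq0}"
    unfolding natext_def posi_Un posi_gneq0 ..
  also have "\<dots> = gneq0 \<union> {f \<in> gambles. \<exists>h\<in>posi G. h \<le> f}"
  proof (intro equalityI subsetI)
    fix f assume "f \<in> posi G \<union> gneq0 \<union> {\<lambda>x. a x + b x | a b. a \<in> posi G \<and> b \<in> gneq0}"
    then consider "f \<in> posi G" | "f \<in> gneq0"
      | a b where "a \<in> posi G" "b \<in> gneq0" "f = (\<lambda>x. a x + b x)"
      by blast
    then show "f \<in> gneq0 \<union> {f \<in> gambles. \<exists>h\<in>posi G. h \<le> f}"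
    proof cases
      case (3 a b)
      then have "f \<in> gambles" "a \<le> f"
        using posi_gambles[OF assms] by (auto simp: gneq0_def le_fun_def intro!: gambles_add)
      with 3 show ?thesis by blast
    qed (use posi_gambles[OF assms] in auto)
  next
    fix f assume f: "f \<in> gneq0 \<union> {f \<in> gambles. \<exists>h\<in>posi G. h \<le> f}"
    show "f \<in> posi G \<union> gneq0 \<union> {\<lambda>x. a x + b x | a b. a \<in> posi G \<and> b \<in> gneq0}"
    proof (cases "f \<in> gneq0 \<or> f \<in> posi G")
      case False
      with f obtain h where h: "h \<in> posi G" "h \<le> f" "f \<in> gambles" "f \<noteq> h" by auto
      let ?d = "\<lambda>x. f x - h x"
      have "?d \<in> gneq0"
        using h posi_gambles[OF assms] by (auto simp: gneq0_def le_fun_def fun_eq_iff intro: gambles_diff)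
      with h(1) have "(\<lambda>x. h x + ?d x) \<in> {\<lambda>x. a x + b x | a b. a \<in> posi G \<and> b \<in> gneq0}"
        by (intro CollectI exI[of _ h] exI[of _ ?d]) simp
      then show ?thesis by simp
    qed auto
  qed
  finally show ?thesis .
qed

lemma gneq0_subset_natext: "gneq0 \<subseteq> natext G"
  unfolding natext_def using subset_posi by blast

lemma bex_natext_iff:
  assumes "G \<subseteq> gambles" "B \<subseteq> gambles"
  shows "(\<exists>f\<in>B. f \<in> natext G) \<longleftrightarrow> (\<exists>f\<in>B. f \<in> gneq0) \<or> (\<exists>f\<in>B. \<exists>h\<in>posi G. \<forall>x. f x \<ge> h x)"
  unfolding natext_eq[OF assms(1)] le_fun_def using assms(2) by blast

lemma in_Ext_if_gneq0:
  assumes "B \<subseteq> gambles" "f \<in> B" "f \<in> gneq0"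
  shows "B \<in> Ext \<A>"
proof (cases "\<A> = {}")
  case False
  then obtain A0 where "A0 \<in> \<A>" by blast
  then show ?thesis
    using False assms gneq0_subset_natext unfolding Ext_def
    by (auto intro!: exI[of _ 1] exI[of _ "\<lambda>_. A0"])
qed (use assms in \<open>auto simp: Ext_def\<close>)

theorem mainTheorem4:
  fixes \<A> :: "('a \<Rightarrow> real) set set"
  assumes "\<A> \<subseteq> Pow gambles"
  shows "Ext' \<A> = Ext \<A>"
proof (cases "\<A> = {}")
  case True
  then show ?thesis by (auto simp: Ext_def Ext'_def)
next
  case nonempty: False
  have dominance_iff: "(\<exists>f\<in>B. f \<in> natext (g ` {..<n}))
      \<longleftrightarrow> (\<exists>f\<in>B. \<exists>h\<in>posi (g ` {..<n}). \<forall>x. f x \<ge> h x)"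
    if "B \<subseteq> gambles" "\<not> (\<exists>f\<in>B. f \<in> gneq0)" "\<forall>i<n. A i \<in> \<A>" "\<forall>i<n. g i \<in> A i"
    for B and n :: nat and A g
  proof -
    have "g ` {..<n} \<subseteq> gambles" using that(3,4) assms by blast
    then show ?thesis using bex_natext_iff[OF _ that(1)] that(2) by blast
  qed
  have "B \<in> Ext' \<A> \<longleftrightarrow> B \<in> Ext \<A>" for B
  proof (cases "B \<subseteq> gambles \<and> (\<exists>f\<in>B. f \<in> gneq0)")
    case True
    then show ?thesis using in_Ext_if_gneq0 unfolding Ext'_def by blast
  next
    case False
    then show ?thesis
      using nonempty unfolding Ext_def Ext'_def by (simp add: dominance_iff cong: conj_cong)
  qed
  then show ?thesis by blast
qed

end
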